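(* Let $G$ be a finite simple graph on $n$ vertices with at least one edge. Then there exists a finite simple graph $G'$ on $n$ vertices such that $G'$ is the disjoint union of $K_2$ and some graph on $n-2$ vertices, and $A_G \cong A_{G'}$ as $\mathbb{C}$-algebras.
   Context: All graphs are finite, with no loops and no multiple edges. For a graph $G$ with vertices numbered $1,\dots,n$, the Clifford graph algebra $A_G$ is the unital associative $\mathbb{C}$-algebra generated by $e_1,\dots,e_n$ subject to the relations $e_i^2=-1$ for all $i$; $e_ie_j=-e_je_i$ if $i\neq j$ and vertices $i,j$ are adjacent; and $e_ie_j=e_je_i$ if $i\ne j$ and vertices $i,j$ are not adjacent. $K_2$ is the complete graph on two vertices (a single edge). The disjoint union of two graphs has as vertex set the disjoint union of vertex sets and as edge set the union of the edge sets. *)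

theory Defs
  imports Complex_Main
begin

definition simple_graph :: "nat \<Rightarrow> nat set set \<Rightarrow> bool" where
  "simple_graph n E \<longleftrightarrow>
     (\<forall>e\<in>E. \<exists>i j. e = {i, j} \<and> i \<noteq> j \<and> i \<in> {1..n} \<and> j \<in> {1..n})"

text \<open>Free associative unital C-algebra on generators e_1..e_n: finitely supported
  functions from words (lists of letters in {1..n}) to complex numbers.\<close>
type_synonym ncpoly = "nat list \<Rightarrow> complex"

definition FA :: "nat \<Rightarrow> ncpoly set" where
  "FA n = {p. finite {w. p w \<noteq> 0} \<and> (\<forall>w. p w \<noteq> 0 \<longrightarrow> set w \<subseteq> {1..n})}"

definition padd :: "ncpoly \<Rightarrow> ncpoly \<Rightarrow> ncpoly" where
  "padd p q = (\<lambda>w. p w + q w)"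

definition psub :: "ncpoly \<Rightarrow> ncpoly \<Rightarrow> ncpoly" where
  "psub p q = (\<lambda>w. p w - q w)"

definition psmult :: "complex \<Rightarrow> ncpoly \<Rightarrow> ncpoly" where
  "psmult c p = (\<lambda>w. c * p w)"

definition pmult :: "ncpoly \<Rightarrow> ncpoly \<Rightarrow> ncpoly" where
  "pmult p q = (\<lambda>w. \<Sum>k\<le>length w. p (take k w) * q (drop k w))"

definition pone :: ncpoly where
  "pone = (\<lambda>w. if w = [] then 1 else 0)"

definition pgen :: "nat \<Rightarrow> ncpoly" where
  "pgen i = (\<lambda>w. if w = [i] then 1 else 0)"

definition relators :: "nat \<Rightarrow> nat set set \<Rightarrow> ncpoly set" where
  "relators n E =
     {padd (pmult (pgen i) (pgen i)) pone | i. i \<in> {1..n}}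
   \<union> {padd (pmult (pgen i) (pgen j)) (pmult (pgen j) (pgen i)) | i j.
        i \<in> {1..n} \<and> j \<in> {1..n} \<and> i \<noteq> j \<and> {i, j} \<in> E}
   \<union> {psub (pmult (pgen i) (pgen j)) (pmult (pgen j) (pgen i)) | i j.
        i \<in> {1..n} \<and> j \<in> {1..n} \<and> i \<noteq> j \<and> {i, j} \<notin> E}"

inductive_set cga_ideal :: "nat \<Rightarrow> nat set set \<Rightarrow> ncpoly set"
  for n :: nat and E :: "nat set set" where
  zero: "(\<lambda>w. 0) \<in> cga_ideal n E"
| rel: "r \<in> relators n E \<Longrightarrow> r \<in> cga_ideal n E"
| add: "p \<in> cga_ideal n E \<Longrightarrow> q \<in> cga_ideal n E \<Longrightarrow> padd p q \<in> cga_ideal n E"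
| smult: "p \<in> cga_ideal n E \<Longrightarrow> psmult c p \<in> cga_ideal n E"
| lmult: "a \<in> FA n \<Longrightarrow> p \<in> cga_ideal n E \<Longrightarrow> pmult a p \<in> cga_ideal n E"
| rmult: "a \<in> FA n \<Longrightarrow> p \<in> cga_ideal n E \<Longrightarrow> pmult p a \<in> cga_ideal n E"

text \<open>The Clifford graph algebra A_G is the quotient FA n / ideal; elements are
  cosets (equivalence classes).\<close>
definition cga_class :: "nat \<Rightarrow> nat set set \<Rightarrow> ncpoly \<Rightarrow> ncpoly set" where
  "cga_class n E p = {q \<in> FA n. psub p q \<in> cga_ideal n E}"

definition cga_carrier :: "nat \<Rightarrow> nat set set \<Rightarrow> ncpoly set set" where
  "cga_carrier n E = cga_class n E ` FA n"

definition cga_iso_map :: "nat \<Rightarrow> nat set set \<Rightarrow> nat set set \<Rightarrow> (ncpoly set \<Rightarrow> ncpoly set) \<Rightarrow> bool" where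
  "cga_iso_map n E E' \<Phi> \<longleftrightarrow>
     bij_betw \<Phi> (cga_carrier n E) (cga_carrier n E')
   \<and> \<Phi> (cga_class n E pone) = cga_class n E' pone
   \<and> (\<forall>p\<in>FA n. \<forall>q\<in>FA n. \<forall>a b.
        a \<in> \<Phi> (cga_class n E p) \<longrightarrow> b \<in> \<Phi> (cga_class n E q) \<longrightarrow>
          \<Phi> (cga_class n E (padd p q)) = cga_class n E' (padd a b)
        \<and> \<Phi> (cga_class n E (pmult p q)) = cga_class n E' (pmult a b))
   \<and> (\<forall>p\<in>FA n. \<forall>a c. a \<in> \<Phi> (cga_class n E p) \<longrightarrow>
          \<Phi> (cga_class n E (psmult c p)) = cga_class n E' (psmult c a))"

definition cga_isomorphic :: "nat \<Rightarrow> nat set set \<Rightarrow> nat set set \<Rightarrow> bool" where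
  "cga_isomorphic n E E' \<longleftrightarrow> (\<exists>\<Phi>. cga_iso_map n E E' \<Phi>)"

end

theory Submission
  imports Defs "HOL-Library.Function_Algebras" "HOL-Combinatorics.Transposition"
begin

text \<open>
  Both isomorphisms we need are induced by monomial substitutions:
  endomorphisms of the free algebra sending each generator e_i to a scalar multiple
  c_i * e_(w_i) of a word. If two such substitutions map the relators of each graph into
  the ideal of the other and are inverse to each other on the generators modulo the ideals,
  they induce mutually inverse algebra isomorphisms of the quotients.

  Given an edge {a, b} of G we first relabel the vertices so that {1, 2} is an edge. Then,
  writing alpha_k and beta_k for adjacency of k to 1 and 2, the substitution fixing e_1, e_2
  and sending e_k (k >= 3) to c_k e_k e_2^alpha_k e_1^beta_k turns G into K_2 on {1, 2}
  disjoint from a graph on {3..n} (the split graph).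
\<close>

section \<open>Arithmetic in the free algebra\<close>

text \<open>Elements of the free algebra are functions from words to complex numbers, so the
  function algebra supplies pointwise addition, subtraction and negation.\<close>

definition mon :: "complex \<Rightarrow> nat list \<Rightarrow> ncpoly" where
  "mon c w = (\<lambda>u. if u = w then c else 0)"

lemma padd_eq: "padd p q = p + q"
  by (simp add: padd_def fun_eq_iff)

lemma psub_eq: "psub p q = p - q"
  by (simp add: psub_def fun_eq_iff)

lemma pgen_eq_mon: "pgen i = mon 1 [i]"
  by (simp add: pgen_def mon_def fun_eq_iff)

lemma pone_eq_mon: "pone = mon 1 []"
  by (simp add: pone_def mon_def fun_eq_iff)

lemma sum_fun_apply: "(\<Sum>x\<in>S. f x) w = (\<Sum>x\<in>S. f x w)" for f :: "'a \<Rightarrow> ncpoly"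
  by (induction S rule: infinite_finite_induct) auto

text \<open>The product of two monomials is the monomial of the concatenated word: only the
  split point k = length u of u @ v contributes to the convolution defining pmult.\<close>
lemma pmult_mon: "pmult (mon c u) (mon d v) = mon (c * d) (u @ v)"
proof
  fix w
  show "pmult (mon c u) (mon d v) w = mon (c * d) (u @ v) w"
  proof (cases "w = u @ v")
    case True
    have "pmult (mon c u) (mon d v) w = (\<Sum>k\<le>length w. if k = length u then c * d else 0)"
      unfolding pmult_def mon_def
    proof (rule sum.cong[OF refl])
      fix k assume k: "k \<in> {..length w}"
      have "take k w = u \<longleftrightarrow> k = length u"
      proof
        assume "take k w = u"
        then have "length (take k w) = length u"
          by simp
        then have "min k (length w) = length u"
          by simp
        with k True show "k = length u"
          by auto
      qed (use True in simp)
      then show "(if take k w = u then c else 0) * (if drop k w = v then d else 0)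
                 = (if k = length u then c * d else 0)"
        using True by auto
    qed
    also have "\<dots> = c * d"
      using True by (simp add: sum.delta)
    finally show ?thesis
      using True by (simp add: mon_def)
  next
    case False
    have "pmult (mon c u) (mon d v) w = (\<Sum>k\<le>length w. 0)"
      unfolding pmult_def mon_def by (rule sum.cong[OF refl]) (use False in auto)
    then show ?thesis
      using False by (simp add: mon_def)
  qed
qed

lemma pmult_add_left: "pmult (p + q) r = pmult p r + pmult q r"
  by (simp add: pmult_def fun_eq_iff sum.distrib distrib_right)

lemma pmult_add_right: "pmult r (p + q) = pmult r p + pmult r q"
  by (simp add: pmult_def fun_eq_iff sum.distrib distrib_left)

lemma pmult_diff_left: "pmult (p - q) r = pmult p r - pmult q r"
  by (simp add: pmult_def fun_eq_iff sum_subtractf left_diff_distrib)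

lemma pmult_diff_right: "pmult r (p - q) = pmult r p - pmult r q"
  by (simp add: pmult_def fun_eq_iff sum_subtractf right_diff_distrib)

lemma pmult_zero_left [simp]: "pmult 0 q = 0"
  by (simp add: pmult_def fun_eq_iff)

lemma pmult_zero_right [simp]: "pmult q 0 = 0"
  by (simp add: pmult_def fun_eq_iff)

lemma pmult_sum_left: "pmult (\<Sum>x\<in>S. f x) r = (\<Sum>x\<in>S. pmult (f x) r)"
  by (induction S rule: infinite_finite_induct)
    (simp_all add: pmult_add_left del: plus_fun_apply zero_fun_apply)

lemma pmult_sum_right: "pmult r (\<Sum>x\<in>S. f x) = (\<Sum>x\<in>S. pmult r (f x))"
  by (induction S rule: infinite_finite_induct)
    (simp_all add: pmult_add_right del: plus_fun_apply zero_fun_apply)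

lemma psmult_mon [simp]: "psmult c (mon d w) = mon (c * d) w"
  by (simp add: psmult_def mon_def fun_eq_iff)

lemma psmult_add: "psmult c (p + q) = psmult c p + psmult c q"
  by (simp add: psmult_def fun_eq_iff distrib_left)

lemma psmult_diff: "psmult c (p - q) = psmult c p - psmult c q"
  by (simp add: psmult_def fun_eq_iff right_diff_distrib)

lemma psmult_zero [simp]: "psmult c 0 = 0"
  by (simp add: psmult_def fun_eq_iff)

lemma psmult_sum: "psmult c (\<Sum>x\<in>S. f x) = (\<Sum>x\<in>S. psmult c (f x))"
  by (induction S rule: infinite_finite_induct)
    (simp_all add: psmult_add del: plus_fun_apply zero_fun_apply)

lemma psmult_neg_one: "psmult (-1) p = - p"
  by (simp add: psmult_def fun_eq_iff)

lemma psmult_zero_left: "psmult 0 p = 0"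
  by (simp add: psmult_def fun_eq_iff)

lemma psmult_apply: "psmult c p w = c * p w"
  by (simp add: psmult_def)

lemma mon_zero [simp]: "mon 0 w = 0"
  by (simp add: mon_def fun_eq_iff)

lemma mon_add: "mon c w + mon d w = mon (c + d) w"
  by (simp add: mon_def fun_eq_iff)

lemma mon_neg: "- mon c w = mon (- c) w"
  by (simp add: mon_def fun_eq_iff)

definition fin_supp :: "ncpoly \<Rightarrow> bool" where
  "fin_supp p \<longleftrightarrow> finite {w. p w \<noteq> 0}"

lemma mon_expansion:
  assumes "finite S" "{w. p w \<noteq> 0} \<subseteq> S"
  shows "p = (\<Sum>w\<in>S. mon (p w) w)"
proof
  fix u
  have "(\<Sum>w\<in>S. mon (p w) w) u = (if u \<in> S then p u else 0)"
    using assms(1) by (simp add: sum_fun_apply mon_def sum.delta)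
  then show "p u = (\<Sum>w\<in>S. mon (p w) w) u"
    using assms(2) by auto
qed

lemma fin_supp_add: "fin_supp p \<Longrightarrow> fin_supp q \<Longrightarrow> fin_supp (p + q)"
  unfolding fin_supp_def
  by (rule finite_subset[of _ "{w. p w \<noteq> 0} \<union> {w. q w \<noteq> 0}"]) auto

lemma fin_supp_mon: "fin_supp (mon c w)"
  unfolding fin_supp_def by (rule finite_subset[of _ "{w}"]) (auto simp: mon_def)

lemma fin_supp_sum: "(\<And>x. x \<in> S \<Longrightarrow> fin_supp (f x)) \<Longrightarrow> fin_supp (\<Sum>x\<in>S. f x)"
proof (induction S rule: infinite_finite_induct)
  case (insert x F)
  then show ?case by (simp del: plus_fun_apply add: fin_supp_add)
qed (simp_all add: fin_supp_def)

lemma FA_fin_supp: "p \<in> FA n \<Longrightarrow> fin_supp p"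
  by (simp add: FA_def fin_supp_def)

lemma FA_support: "p \<in> FA n \<Longrightarrow> p w \<noteq> 0 \<Longrightarrow> set w \<subseteq> {1..n}"
  by (simp add: FA_def)

lemma FA_expansion: "p \<in> FA n \<Longrightarrow> p = (\<Sum>w\<in>{w. p w \<noteq> 0}. mon (p w) w)"
  by (rule mon_expansion) (auto simp: FA_def)

lemma FA_mon: "set w \<subseteq> {1..n} \<Longrightarrow> mon c w \<in> FA n"
  using fin_supp_mon[of c w] by (auto simp: FA_def fin_supp_def mon_def)

lemma FA_pgen: "i \<in> {1..n} \<Longrightarrow> pgen i \<in> FA n"
  by (simp add: pgen_eq_mon FA_mon)

lemma FA_pone: "pone \<in> FA n"
  by (simp add: pone_eq_mon FA_mon)

lemma FA_zero [simp]: "0 \<in> FA n"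
  by (simp add: FA_def)

lemma FA_add: "p \<in> FA n \<Longrightarrow> q \<in> FA n \<Longrightarrow> p + q \<in> FA n"
proof -
  assume p: "p \<in> FA n" and q: "q \<in> FA n"
  have "fin_supp (p + q)"
    using p q by (intro fin_supp_add FA_fin_supp)
  moreover have "set w \<subseteq> {1..n}" if "(p + q) w \<noteq> 0" for w
    using that FA_support[OF p] FA_support[OF q] by force
  ultimately show ?thesis
    by (simp add: FA_def fin_supp_def)
qed

lemma FA_smult: "p \<in> FA n \<Longrightarrow> psmult c p \<in> FA n"
proof -
  assume p: "p \<in> FA n"
  have "{w. psmult c p w \<noteq> 0} \<subseteq> {w. p w \<noteq> 0}"
    by (auto simp: psmult_def)
  then show ?thesis
    using p finite_subset by (auto simp: FA_def psmult_def)
qed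

lemma FA_diff: "p \<in> FA n \<Longrightarrow> q \<in> FA n \<Longrightarrow> p - q \<in> FA n"
  using FA_add[of p n "psmult (-1) q"] FA_smult[of q n "-1"] by (simp add: psmult_neg_one)

lemma FA_sum: "(\<And>x. x \<in> S \<Longrightarrow> f x \<in> FA n) \<Longrightarrow> (\<Sum>x\<in>S. f x) \<in> FA n"
  by (induction S rule: infinite_finite_induct) (auto intro: FA_add)

lemma pmult_expansion:
  assumes "p \<in> FA n" "q \<in> FA n"
  shows "pmult p q = (\<Sum>u\<in>{w. p w \<noteq> 0}. \<Sum>v\<in>{w. q w \<noteq> 0}. mon (p u * q v) (u @ v))"
proof -
  have "pmult p q = pmult (\<Sum>u\<in>{w. p w \<noteq> 0}. mon (p u) u) (\<Sum>v\<in>{w. q w \<noteq> 0}. mon (q v) v)"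
    by (rule arg_cong2[OF FA_expansion[OF assms(1)] FA_expansion[OF assms(2)]])
  also have "\<dots> = (\<Sum>u\<in>{w. p w \<noteq> 0}. pmult (mon (p u) u) (\<Sum>v\<in>{w. q w \<noteq> 0}. mon (q v) v))"
    by (rule pmult_sum_left)
  finally show ?thesis
    by (simp only: pmult_sum_right pmult_mon)
qed

lemma FA_mult:
  assumes p: "p \<in> FA n" and q: "q \<in> FA n"
  shows "pmult p q \<in> FA n"
  unfolding pmult_expansion[OF p q]
proof (intro FA_sum FA_mon)
  fix u v assume "u \<in> {w. p w \<noteq> 0}" "v \<in> {w. q w \<noteq> 0}"
  then show "set (u @ v) \<subseteq> {1..n}"
    using FA_support[OF p] FA_support[OF q] by auto
qed

lemma relators_FA: "r \<in> relators n E \<Longrightarrow> r \<in> FA n"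
  unfolding relators_def
  by (auto simp: padd_eq psub_eq pgen_eq_mon pone_eq_mon pmult_mon intro!: FA_add FA_diff FA_mon)

lemma ideal_FA: "p \<in> cga_ideal n E \<Longrightarrow> p \<in> FA n"
proof (induction rule: cga_ideal.induct)
  case zero
  then show ?case by (simp add: zero_fun_def[symmetric])
next
  case (rel r)
  then show ?case by (rule relators_FA)
next
  case (add p q)
  then show ?case by (metis padd_eq FA_add)
qed (simp_all add: FA_smult FA_mult)

lemma ideal_zero [simp]: "0 \<in> cga_ideal n E"
  using cga_ideal.zero by (simp add: zero_fun_def)

lemma ideal_add: "p \<in> cga_ideal n E \<Longrightarrow> q \<in> cga_ideal n E \<Longrightarrow> p + q \<in> cga_ideal n E"
  using cga_ideal.add by (simp add: padd_eq)

lemma ideal_neg: "p \<in> cga_ideal n E \<Longrightarrow> - p \<in> cga_ideal n E"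
  using cga_ideal.smult[of p n E "-1"] by (simp only: psmult_neg_one)

lemma ideal_relator: "r \<in> relators n E \<Longrightarrow> r \<in> cga_ideal n E"
  by (rule cga_ideal.rel)

definition cga_eq :: "nat \<Rightarrow> nat set set \<Rightarrow> ncpoly \<Rightarrow> ncpoly \<Rightarrow> bool" where
  "cga_eq n E p q \<longleftrightarrow> p - q \<in> cga_ideal n E"

lemma cga_eq_refl: "cga_eq n E p p"
  by (simp add: cga_eq_def)

lemma cga_eq_sym: "cga_eq n E p q \<Longrightarrow> cga_eq n E q p"
  unfolding cga_eq_def using ideal_neg by fastforce

lemma cga_eq_trans: "cga_eq n E p q \<Longrightarrow> cga_eq n E q r \<Longrightarrow> cga_eq n E p r"
  unfolding cga_eq_def using ideal_add by fastforce

lemma cga_eq_add: "cga_eq n E p p' \<Longrightarrow> cga_eq n E q q' \<Longrightarrow> cga_eq n E (p + q) (p' + q')"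
  unfolding cga_eq_def using ideal_add by (fastforce simp: algebra_simps)

lemma cga_eq_smult: "cga_eq n E p q \<Longrightarrow> cga_eq n E (psmult c p) (psmult c q)"
  unfolding cga_eq_def by (simp add: psmult_diff[symmetric] cga_ideal.smult)

lemma cga_eq_mult:
  assumes "cga_eq n E p p'" "cga_eq n E q q'" "p' \<in> FA n" "q \<in> FA n"
  shows "cga_eq n E (pmult p q) (pmult p' q')"
proof -
  have "pmult (p - p') q + pmult p' (q - q') \<in> cga_ideal n E"
    using assms unfolding cga_eq_def by (intro ideal_add cga_ideal.lmult cga_ideal.rmult)
  moreover have "pmult (p - p') q + pmult p' (q - q') = pmult p q - pmult p' q'"
    by (simp add: pmult_diff_left pmult_diff_right)
  ultimately show ?thesis
    unfolding cga_eq_def by simp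
qed

lemma cga_eq_sum:
  "(\<And>x. x \<in> S \<Longrightarrow> cga_eq n E (f x) (g x)) \<Longrightarrow> cga_eq n E (\<Sum>x\<in>S. f x) (\<Sum>x\<in>S. g x)"
proof (induction S rule: infinite_finite_induct)
  case (insert x F)
  then show ?case by (simp del: plus_fun_apply add: cga_eq_add)
qed (simp_all add: cga_eq_refl)

text \<open>The sign by which two distinct generators commute: e_i e_j = comm_sign E i j * e_j e_i.\<close>
definition comm_sign :: "nat set set \<Rightarrow> nat \<Rightarrow> nat \<Rightarrow> complex" where
  "comm_sign E i j = (if {i, j} \<in> E then -1 else 1)"

lemma comm_sign_commute: "comm_sign E j i = comm_sign E i j"
  by (simp add: comm_sign_def insert_commute)

lemma commutator_in_ideal:
  assumes "i \<in> {1..n}" "j \<in> {1..n}" "i \<noteq> j"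
  shows "mon 1 [i, j] + mon (- comm_sign E i j) [j, i] \<in> cga_ideal n E"
proof (cases "{i, j} \<in> E")
  case True
  then have "padd (pmult (pgen i) (pgen j)) (pmult (pgen j) (pgen i)) \<in> relators n E"
    using assms unfolding relators_def by blast
  then show ?thesis
    using True by (auto simp: comm_sign_def padd_eq pgen_eq_mon pmult_mon intro: ideal_relator)
next
  case False
  then have "psub (pmult (pgen i) (pgen j)) (pmult (pgen j) (pgen i)) \<in> relators n E"
    using assms unfolding relators_def by blast
  then have "mon 1 [i, j] - mon 1 [j, i] \<in> cga_ideal n E"
    by (auto simp: psub_eq pgen_eq_mon pmult_mon intro: ideal_relator)
  then show ?thesis
    using False by (simp add: comm_sign_def diff_conv_add_uminus mon_neg)
qed

lemma square_in_ideal: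
  assumes "i \<in> {1..n}"
  shows "mon 1 [i, i] + mon 1 [] \<in> cga_ideal n E"
proof -
  have "padd (pmult (pgen i) (pgen i)) pone \<in> relators n E"
    using assms unfolding relators_def by blast
  then show ?thesis
    by (auto simp: padd_eq pgen_eq_mon pone_eq_mon pmult_mon intro: ideal_relator)
qed

lemma swap_cga_eq:
  assumes "i \<in> {1..n}" "j \<in> {1..n}" "i \<noteq> j" "set u \<subseteq> {1..n}" "set v \<subseteq> {1..n}"
  shows "cga_eq n E (mon c (u @ i # j # v)) (mon (c * comm_sign E i j) (u @ j # i # v))"
proof -
  have "pmult (mon c u) (pmult (mon 1 [i, j] + mon (- comm_sign E i j) [j, i]) (mon 1 v))
          \<in> cga_ideal n E"
    using assms commutator_in_ideal by (intro cga_ideal.lmult cga_ideal.rmult FA_mon) auto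
  then show ?thesis
    by (simp add: cga_eq_def pmult_add_left pmult_add_right pmult_mon diff_conv_add_uminus mon_neg)
qed

lemma square_cga_eq:
  assumes "i \<in> {1..n}" "set u \<subseteq> {1..n}" "set v \<subseteq> {1..n}"
  shows "cga_eq n E (mon c (u @ i # i # v)) (mon (- c) (u @ v))"
proof -
  have "pmult (mon c u) (pmult (mon 1 [i, i] + mon 1 []) (mon 1 v)) \<in> cga_ideal n E"
    using assms square_in_ideal by (intro cga_ideal.lmult cga_ideal.rmult FA_mon) auto
  then show ?thesis
    by (simp add: cga_eq_def pmult_add_left pmult_add_right pmult_mon diff_conv_add_uminus mon_neg)
qed

text \<open>Insertion sort with cancellation: nf E w = (s, w') where w' is strictly increasing
  and e_w = s * e_w' in the algebra. Since it is executable, the simplifier can decide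
  concrete identities between monomials.\<close>

fun nf_insert :: "nat set set \<Rightarrow> nat \<Rightarrow> nat list \<Rightarrow> complex \<times> nat list" where
  "nf_insert E i [] = (1, [i])"
| "nf_insert E i (j # w) =
     (if i < j then (1, i # j # w) else if i = j then (-1, w)
      else (case nf_insert E i w of (s, w') \<Rightarrow> (comm_sign E i j * s, j # w')))"

fun nf :: "nat set set \<Rightarrow> nat list \<Rightarrow> complex \<times> nat list" where
  "nf E [] = (1, [])"
| "nf E (i # w) =
     (case nf E w of (s, w') \<Rightarrow> (case nf_insert E i w' of (t, w'') \<Rightarrow> (s * t, w'')))"

lemma nf_insert_set: "set (snd (nf_insert E i w)) \<subseteq> insert i (set w)"
  by (induction E i w rule: nf_insert.induct) (auto split: prod.splits)

lemma nf_set: "set (snd (nf E w)) \<subseteq> set w"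
proof (induction E w rule: nf.induct)
  case (2 E i w)
  then show ?case
    using nf_insert_set[of E i "snd (nf E w)"] by (auto split: prod.splits)
qed simp

lemma nf_insert_cga_eq:
  assumes "i \<in> {1..n}" "set u \<subseteq> {1..n}" "set w \<subseteq> {1..n}"
  shows "cga_eq n E (mon c (u @ i # w))
           (mon (c * fst (nf_insert E i w)) (u @ snd (nf_insert E i w)))"
  using assms
proof (induction E i w arbitrary: u c rule: nf_insert.induct)
  case (1 E i)
  then show ?case by (simp add: cga_eq_refl)
next
  case (2 E i j w)
  consider "i < j" | "i = j" | "j < i"
    by linarith
  then show ?case
  proof cases
    case 1
    then show ?thesis by (simp add: cga_eq_refl)
  next
    case 2
    then show ?thesis
      using "2.prems" square_cga_eq[of i n u w E c] by simp
  next
    case 3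
    obtain s w' where sw: "nf_insert E i w = (s, w')"
      by fastforce
    have "cga_eq n E (mon c (u @ i # j # w)) (mon (c * comm_sign E i j) (u @ j # i # w))"
      using "2.prems" 3 by (intro swap_cga_eq) auto
    moreover have "cga_eq n E (mon (c * comm_sign E i j) ((u @ [j]) @ i # w))
                     (mon (c * comm_sign E i j * s) ((u @ [j]) @ w'))"
      using "2.IH"[of "u @ [j]" "c * comm_sign E i j"] "2.prems" 3 sw by auto
    ultimately show ?thesis
      using 3 sw by (auto intro: cga_eq_trans simp: mult.assoc)
  qed
qed

lemma nf_cga_eq:
  assumes "set w \<subseteq> {1..n}"
  shows "cga_eq n E (mon c w) (mon (c * fst (nf E w)) (snd (nf E w)))"
proof -
  have "cga_eq n E (mon c (u @ w)) (mon (c * fst (nf E w)) (u @ snd (nf E w)))"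
    if "set u \<subseteq> {1..n}" for u
    using assms that
  proof (induction E w arbitrary: u c rule: nf.induct)
    case (1 E)
    then show ?case by (simp add: cga_eq_refl)
  next
    case (2 E i w)
    obtain s w' where sw: "nf E w = (s, w')"
      by fastforce
    obtain t w'' where tw: "nf_insert E i w' = (t, w'')"
      by fastforce
    have w': "set w' \<subseteq> {1..n}"
      using nf_set[of E w] sw "2.prems" by auto
    have "cga_eq n E (mon c ((u @ [i]) @ w)) (mon (c * s) ((u @ [i]) @ w'))"
      using "2.IH"[of "u @ [i]" c] "2.prems" sw by auto
    moreover have "cga_eq n E (mon (c * s) (u @ i # w')) (mon (c * s * t) (u @ w''))"
      using nf_insert_cga_eq[of i n u w' E "c * s"] "2.prems" w' tw by auto
    ultimately show ?case
      using sw tw by (auto intro: cga_eq_trans simp: mult.assoc)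
  qed
  from this[of "[]"] show ?thesis by simp
qed

lemma cga_eq_by_nf:
  assumes "set w1 \<subseteq> {1..n}" "set w2 \<subseteq> {1..n}"
    and "snd (nf E w1) = snd (nf E w2)" "c1 * fst (nf E w1) = c2 * fst (nf E w2)"
  shows "cga_eq n E (mon c1 w1) (mon c2 w2)"
  using nf_cga_eq[OF assms(1), of E c1] nf_cga_eq[OF assms(2), of E c2] assms(3,4)
  by (metis cga_eq_sym cga_eq_trans)

text \<open>Moving a word v past a word u costs the product of the commutation signs of all
  pairs of letters (equal letters commute).\<close>
definition letter_sign :: "nat set set \<Rightarrow> nat \<Rightarrow> nat \<Rightarrow> complex" where
  "letter_sign E a b = (if a = b then 1 else comm_sign E a b)"

definition exchange_sign :: "nat set set \<Rightarrow> nat list \<Rightarrow> nat list \<Rightarrow> complex" where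
  "exchange_sign E u v = (\<Prod>a\<leftarrow>u. \<Prod>b\<leftarrow>v. letter_sign E a b)"

lemma exchange_sign_simps [simp]:
  "exchange_sign E [] v = 1"
  "exchange_sign E (a # u) v = (\<Prod>b\<leftarrow>v. letter_sign E a b) * exchange_sign E u v"
  by (simp_all add: exchange_sign_def)

lemma swap_letter_word:
  assumes "a \<in> {1..n}" "set v \<subseteq> {1..n}" "set x \<subseteq> {1..n}" "set y \<subseteq> {1..n}"
  shows "cga_eq n E (mon c (x @ a # v @ y))
           (mon (c * (\<Prod>b\<leftarrow>v. letter_sign E a b)) (x @ v @ a # y))"
  using assms
proof (induction v arbitrary: x c)
  case Nil
  then show ?case by (simp add: cga_eq_refl)
next
  case (Cons b v)
  have b: "b \<in> {1..n}"
    using Cons.prems by auto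
  have "cga_eq n E (mon c (x @ a # b # v @ y)) (mon (c * letter_sign E a b) (x @ b # a # v @ y))"
  proof (cases "a = b")
    case True
    then show ?thesis by (simp add: letter_sign_def cga_eq_refl)
  next
    case False
    then show ?thesis
      using swap_cga_eq[of a n b x "v @ y" E c] Cons.prems b by (simp add: letter_sign_def)
  qed
  moreover have "cga_eq n E (mon (c * letter_sign E a b) ((x @ [b]) @ a # v @ y))
      (mon (c * letter_sign E a b * (\<Prod>b\<leftarrow>v. letter_sign E a b)) ((x @ [b]) @ v @ a # y))"
    using Cons.IH[of "x @ [b]" "c * letter_sign E a b"] Cons.prems b by auto
  ultimately show ?case
    by (auto intro: cga_eq_trans simp: mult.assoc)
qed

lemma swap_words:
  assumes "set u \<subseteq> {1..n}" "set v \<subseteq> {1..n}" "set x \<subseteq> {1..n}" "set y \<subseteq> {1..n}"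
  shows "cga_eq n E (mon c (x @ u @ v @ y)) (mon (c * exchange_sign E u v) (x @ v @ u @ y))"
  using assms
proof (induction u arbitrary: x c)
  case Nil
  then show ?case by (simp add: cga_eq_refl)
next
  case (Cons a u)
  have a: "a \<in> {1..n}"
    using Cons.prems by auto
  have "cga_eq n E (mon c ((x @ [a]) @ u @ v @ y))
          (mon (c * exchange_sign E u v) ((x @ [a]) @ v @ u @ y))"
    using Cons.IH[of "x @ [a]" c] Cons.prems a by auto
  moreover have "cga_eq n E (mon (c * exchange_sign E u v) (x @ a # v @ (u @ y)))
      (mon (c * exchange_sign E u v * (\<Prod>b\<leftarrow>v. letter_sign E a b)) (x @ v @ a # u @ y))"
    using swap_letter_word[of a n v x "u @ y" E "c * exchange_sign E u v"] Cons.prems a by auto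
  ultimately show ?case
    by (auto intro: cga_eq_trans simp: mult_ac)
qed

section \<open>Monomial substitutions\<close>

definition word_coeff :: "(nat \<Rightarrow> complex) \<Rightarrow> nat list \<Rightarrow> complex" where
  "word_coeff C w = (\<Prod>a\<leftarrow>w. C a)"

definition word_image :: "(nat \<Rightarrow> nat list) \<Rightarrow> nat list \<Rightarrow> nat list" where
  "word_image W w = concat (map W w)"

definition word_subst :: "(nat \<Rightarrow> complex) \<Rightarrow> (nat \<Rightarrow> nat list) \<Rightarrow> ncpoly \<Rightarrow> ncpoly" where
  "word_subst C W p = (\<Sum>w\<in>{w. p w \<noteq> 0}. mon (p w * word_coeff C w) (word_image W w))"

lemma word_coeff_simps [simp]:
  "word_coeff C [] = 1" "word_coeff C (a # w) = C a * word_coeff C w"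
  "word_coeff C (u @ v) = word_coeff C u * word_coeff C v"
  by (simp_all add: word_coeff_def)

lemma word_image_simps [simp]:
  "word_image W [] = []" "word_image W (a # w) = W a @ word_image W w"
  "word_image W (u @ v) = word_image W u @ word_image W v"
  by (simp_all add: word_image_def)

lemma word_image_range:
  "(\<And>a. a \<in> set w \<Longrightarrow> set (W a) \<subseteq> S) \<Longrightarrow> set (word_image W w) \<subseteq> S"
  by (induction w) auto

lemma word_subst_expansion:
  assumes "finite S" "{w. p w \<noteq> 0} \<subseteq> S"
  shows "word_subst C W p = (\<Sum>w\<in>S. mon (p w * word_coeff C w) (word_image W w))"
  unfolding word_subst_def by (rule sum.mono_neutral_left) (use assms in auto)

lemma word_subst_mon: "word_subst C W (mon c w) = mon (c * word_coeff C w) (word_image W w)"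
proof -
  have "word_subst C W (mon c w) = (\<Sum>u\<in>{w}. mon (mon c w u * word_coeff C u) (word_image W u))"
    by (rule word_subst_expansion) (auto simp: mon_def)
  then show ?thesis
    by (simp add: mon_def)
qed

lemma word_subst_pgen: "word_subst C W (pgen i) = mon (C i) (W i)"
  by (simp add: pgen_eq_mon word_subst_mon)

lemma word_subst_add:
  assumes p: "fin_supp p" and q: "fin_supp q"
  shows "word_subst C W (p + q) = word_subst C W p + word_subst C W q"
proof -
  let ?S = "{w. p w \<noteq> 0} \<union> {w. q w \<noteq> 0}"
  let ?m = "\<lambda>r w. mon (r w * word_coeff C w) (word_image W w)"
  have S: "finite ?S"
    using p q by (simp add: fin_supp_def)
  have "word_subst C W (p + q) = (\<Sum>w\<in>?S. ?m p w + ?m q w)"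
    by (subst word_subst_expansion[OF S]) (auto simp: mon_add distrib_right)
  also have "\<dots> = (\<Sum>w\<in>?S. ?m p w) + (\<Sum>w\<in>?S. ?m q w)"
    by (rule sum.distrib)
  also have "\<dots> = word_subst C W p + word_subst C W q"
    using word_subst_expansion[OF S, of p C W] word_subst_expansion[OF S, of q C W] by auto
  finally show ?thesis .
qed

lemma word_subst_sum:
  "(\<And>x. x \<in> S \<Longrightarrow> fin_supp (f x)) \<Longrightarrow> word_subst C W (\<Sum>x\<in>S. f x) = (\<Sum>x\<in>S. word_subst C W (f x))"
proof (induction S rule: infinite_finite_induct)
  case (insert x F)
  then show ?case by (simp del: plus_fun_apply add: word_subst_add fin_supp_sum)
qed (simp_all add: word_subst_def)

lemma word_subst_smult:
  assumes "fin_supp p"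
  shows "word_subst C W (psmult c p) = psmult c (word_subst C W p)"
proof -
  have "word_subst C W (psmult c p)
          = (\<Sum>w\<in>{w. p w \<noteq> 0}. mon (psmult c p w * word_coeff C w) (word_image W w))"
    by (rule word_subst_expansion) (use assms in \<open>auto simp: fin_supp_def psmult_apply\<close>)
  also have "\<dots> = psmult c (word_subst C W p)"
    unfolding word_subst_def psmult_sum by (rule sum.cong) (simp_all add: psmult_apply mult.assoc)
  finally show ?thesis .
qed

lemma word_subst_mult:
  assumes p: "p \<in> FA n" and q: "q \<in> FA n"
  shows "word_subst C W (pmult p q) = pmult (word_subst C W p) (word_subst C W q)"
proof -
  let ?P = "{w. p w \<noteq> 0}" and ?Q = "{w. q w \<noteq> 0}"
  have "word_subst C W (pmult p q)
          = (\<Sum>u\<in>?P. \<Sum>v\<in>?Q. word_subst C W (mon (p u * q v) (u @ v)))"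
    unfolding pmult_expansion[OF p q]
    by (simp add: word_subst_sum fin_supp_sum fin_supp_mon del: plus_fun_apply)
  also have "\<dots> = (\<Sum>u\<in>?P. \<Sum>v\<in>?Q. pmult (mon (p u * word_coeff C u) (word_image W u))
                                        (mon (q v * word_coeff C v) (word_image W v)))"
    by (simp add: word_subst_mon pmult_mon mult_ac)
  also have "\<dots> = pmult (word_subst C W p) (word_subst C W q)"
    unfolding word_subst_def by (simp only: pmult_sum_left) (simp only: pmult_sum_right)
  finally show ?thesis .
qed

lemma word_subst_FA:
  assumes "p \<in> FA n" "\<And>i. i \<in> {1..n} \<Longrightarrow> set (W i) \<subseteq> {1..n}"
  shows "word_subst C W p \<in> FA n"
  unfolding word_subst_def
proof (intro FA_sum FA_mon word_image_range)
  fix w a assume "w \<in> {w. p w \<noteq> 0}" "a \<in> set w"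
  then show "set (W a) \<subseteq> {1..n}"
    using FA_support[OF assms(1)] assms(2) by blast
qed

definition alg_hom :: "nat \<Rightarrow> (ncpoly \<Rightarrow> ncpoly) \<Rightarrow> bool" where
  "alg_hom n h \<longleftrightarrow> (\<forall>p\<in>FA n. h p \<in> FA n)
     \<and> (\<forall>p\<in>FA n. \<forall>q\<in>FA n. h (p + q) = h p + h q \<and> h (pmult p q) = pmult (h p) (h q))
     \<and> (\<forall>p\<in>FA n. \<forall>c. h (psmult c p) = psmult c (h p))
     \<and> h pone = pone"

lemma alg_hom_word_subst:
  assumes "\<And>i. i \<in> {1..n} \<Longrightarrow> set (W i) \<subseteq> {1..n}"
  shows "alg_hom n (word_subst C W)"
  unfolding alg_hom_def
proof (intro conjI ballI allI)
  fix p q assume p: "p \<in> FA n" and q: "q \<in> FA n"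
  show "word_subst C W p \<in> FA n"
    using word_subst_FA[OF p assms] .
  show "word_subst C W (p + q) = word_subst C W p + word_subst C W q"
    using word_subst_add[OF FA_fin_supp[OF p] FA_fin_supp[OF q]] .
  show "word_subst C W (pmult p q) = pmult (word_subst C W p) (word_subst C W q)"
    using word_subst_mult[OF p q] .
next
  fix p c assume "p \<in> FA n"
  then show "word_subst C W (psmult c p) = psmult c (word_subst C W p)"
    by (intro word_subst_smult FA_fin_supp)
next
  show "word_subst C W pone = pone"
    by (simp add: pone_eq_mon word_subst_mon)
qed

definition maps_ideal :: "nat \<Rightarrow> nat set set \<Rightarrow> nat set set \<Rightarrow> (ncpoly \<Rightarrow> ncpoly) \<Rightarrow> bool" where
  "maps_ideal n E E' h \<longleftrightarrow> (\<forall>p\<in>cga_ideal n E. h p \<in> cga_ideal n E')"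

lemma alg_hom_comp: "alg_hom n h \<Longrightarrow> alg_hom n g \<Longrightarrow> alg_hom n (g \<circ> h)"
  unfolding alg_hom_def by auto

context
  fixes n :: nat and h :: "ncpoly \<Rightarrow> ncpoly"
  assumes h: "alg_hom n h"
begin

lemma alg_hom_FA: "p \<in> FA n \<Longrightarrow> h p \<in> FA n"
  using h by (simp add: alg_hom_def)

lemma alg_hom_add: "p \<in> FA n \<Longrightarrow> q \<in> FA n \<Longrightarrow> h (p + q) = h p + h q"
  using h by (simp add: alg_hom_def)

lemma alg_hom_mult: "p \<in> FA n \<Longrightarrow> q \<in> FA n \<Longrightarrow> h (pmult p q) = pmult (h p) (h q)"
  using h by (simp add: alg_hom_def)

lemma alg_hom_smult: "p \<in> FA n \<Longrightarrow> h (psmult c p) = psmult c (h p)"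
  using h by (simp add: alg_hom_def)

lemma alg_hom_one: "h pone = pone"
  using h by (simp add: alg_hom_def)

lemma alg_hom_zero: "h 0 = 0"
  using alg_hom_smult[of 0 0] by (simp add: psmult_zero_left)

lemma alg_hom_diff: "p \<in> FA n \<Longrightarrow> q \<in> FA n \<Longrightarrow> h (p - q) = h p - h q"
  using alg_hom_add[of p "psmult (-1) q"] alg_hom_smult[of q "-1"] FA_smult[of q n "-1"]
  by (simp add: psmult_neg_one)

lemma alg_hom_sum: "(\<And>x. x \<in> S \<Longrightarrow> f x \<in> FA n) \<Longrightarrow> h (\<Sum>x\<in>S. f x) = (\<Sum>x\<in>S. h (f x))"
proof (induction S rule: infinite_finite_induct)
  case (insert x F)
  then show ?case by (simp del: plus_fun_apply add: alg_hom_add FA_sum)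
qed (simp_all add: alg_hom_zero)

lemma alg_hom_maps_ideal:
  assumes relators_mapped: "\<And>r. r \<in> relators n E \<Longrightarrow> h r \<in> cga_ideal n E'"
  shows "maps_ideal n E E' h"
  unfolding maps_ideal_def
proof
  fix p assume "p \<in> cga_ideal n E"
  then show "h p \<in> cga_ideal n E'"
  proof (induction rule: cga_ideal.induct)
    case zero
    then show ?case using alg_hom_zero by (simp add: zero_fun_def[symmetric])
  next
    case (rel r)
    then show ?case by (rule relators_mapped)
  next
    case (add p q)
    have "h (padd p q) = h p + h q"
      using alg_hom_add[OF ideal_FA[OF add.hyps(1)] ideal_FA[OF add.hyps(2)]] by (simp only: padd_eq)
    then show ?case
      using ideal_add[OF add.IH] by (simp only:)
  next
    case (smult p c)
    then show ?case by (simp add: alg_hom_smult ideal_FA cga_ideal.smult)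
  next
    case (lmult a p)
    then show ?case by (simp add: alg_hom_mult ideal_FA alg_hom_FA cga_ideal.lmult)
  next
    case (rmult a p)
    then show ?case by (simp add: alg_hom_mult ideal_FA alg_hom_FA cga_ideal.rmult)
  qed
qed

lemma alg_hom_cga_eq:
  assumes "maps_ideal n E E' h" and "p \<in> FA n" "q \<in> FA n" "cga_eq n E p q"
  shows "cga_eq n E' (h p) (h q)"
  using assms unfolding cga_eq_def maps_ideal_def by (simp add: alg_hom_diff[symmetric])

lemma alg_hom_fixes_all:
  assumes gens: "\<And>i. i \<in> {1..n} \<Longrightarrow> cga_eq n E (h (pgen i)) (pgen i)"
    and p: "p \<in> FA n"
  shows "cga_eq n E (h p) p"
proof -
  have words: "cga_eq n E (h (mon 1 w)) (mon 1 w)" if "set w \<subseteq> {1..n}" for w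
    using that
  proof (induction w)
    case Nil
    then show ?case using alg_hom_one by (simp add: pone_eq_mon cga_eq_refl)
  next
    case (Cons i w)
    have i: "mon 1 [i] \<in> FA n" and w: "mon 1 w \<in> FA n"
      by (rule FA_mon, use Cons.prems in simp)+
    have "mon 1 (i # w) = pmult (mon 1 [i]) (mon 1 w)"
      by (simp add: pmult_mon)
    moreover have "cga_eq n E (pmult (h (mon 1 [i])) (h (mon 1 w))) (pmult (mon 1 [i]) (mon 1 w))"
      using gens[of i] Cons i w alg_hom_FA by (intro cga_eq_mult) (auto simp: pgen_eq_mon)
    ultimately show ?case
      using alg_hom_mult[OF i w] by simp
  qed
  let ?S = "{w. p w \<noteq> 0}"
  have supp: "set w \<subseteq> {1..n}" if "w \<in> ?S" for w
    using that FA_support[OF p] by blast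
  have p_eq: "p = (\<Sum>w\<in>?S. psmult (p w) (mon 1 w))"
    using FA_expansion[OF p] by simp
  have "h p = (\<Sum>w\<in>?S. h (psmult (p w) (mon 1 w)))"
    by (subst p_eq, rule alg_hom_sum) (use supp in \<open>blast intro: FA_smult FA_mon\<close>)
  also have "\<dots> = (\<Sum>w\<in>?S. psmult (p w) (h (mon 1 w)))"
    by (rule sum.cong[OF refl], rule alg_hom_smult, rule FA_mon) (use supp in blast)
  finally have h_p: "h p = (\<Sum>w\<in>?S. psmult (p w) (h (mon 1 w)))" .
  have "cga_eq n E (\<Sum>w\<in>?S. psmult (p w) (h (mon 1 w))) (\<Sum>w\<in>?S. psmult (p w) (mon 1 w))"
    by (intro cga_eq_sum cga_eq_smult words supp)
  then show ?thesis
    using h_p p_eq by simp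
qed

end

section \<open>Mutually inverse endomorphisms induce isomorphisms\<close>

definition inverse_homs ::
    "nat \<Rightarrow> nat set set \<Rightarrow> nat set set \<Rightarrow> (ncpoly \<Rightarrow> ncpoly) \<Rightarrow> (ncpoly \<Rightarrow> ncpoly) \<Rightarrow> bool" where
  "inverse_homs n E E' \<rho> \<kappa> \<longleftrightarrow> alg_hom n \<rho> \<and> alg_hom n \<kappa>
     \<and> maps_ideal n E E' \<rho> \<and> maps_ideal n E' E \<kappa>
     \<and> (\<forall>p\<in>FA n. cga_eq n E (\<kappa> (\<rho> p)) p) \<and> (\<forall>q\<in>FA n. cga_eq n E' (\<rho> (\<kappa> q)) q)"

lemma inverse_homs_sym: "inverse_homs n E E' \<rho> \<kappa> \<Longrightarrow> inverse_homs n E' E \<kappa> \<rho>"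
  unfolding inverse_homs_def by auto

lemma inverse_homs_trans:
  assumes "inverse_homs n E E1 \<rho>1 \<kappa>1" and "inverse_homs n E1 E2 \<rho>2 \<kappa>2"
  shows "inverse_homs n E E2 (\<rho>2 \<circ> \<rho>1) (\<kappa>1 \<circ> \<kappa>2)"
proof -
  from assms have h: "alg_hom n \<rho>1" "alg_hom n \<kappa>1" "alg_hom n \<rho>2" "alg_hom n \<kappa>2"
    and i: "maps_ideal n E E1 \<rho>1" "maps_ideal n E1 E \<kappa>1" "maps_ideal n E1 E2 \<rho>2" "maps_ideal n E2 E1 \<kappa>2"
    and c: "\<And>p. p \<in> FA n \<Longrightarrow> cga_eq n E (\<kappa>1 (\<rho>1 p)) p"
      "\<And>q. q \<in> FA n \<Longrightarrow> cga_eq n E1 (\<rho>1 (\<kappa>1 q)) q"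
      "\<And>p. p \<in> FA n \<Longrightarrow> cga_eq n E1 (\<kappa>2 (\<rho>2 p)) p"
      "\<And>q. q \<in> FA n \<Longrightarrow> cga_eq n E2 (\<rho>2 (\<kappa>2 q)) q"
    unfolding inverse_homs_def by auto
  have "cga_eq n E (\<kappa>1 (\<kappa>2 (\<rho>2 (\<rho>1 p)))) p" if p: "p \<in> FA n" for p
  proof -
    have "cga_eq n E (\<kappa>1 (\<kappa>2 (\<rho>2 (\<rho>1 p)))) (\<kappa>1 (\<rho>1 p))"
      by (rule alg_hom_cga_eq[OF h(2) i(2)]) (use p h alg_hom_FA c(3) in auto)
    then show ?thesis
      using c(1)[OF p] by (rule cga_eq_trans)
  qed
  moreover have "cga_eq n E2 (\<rho>2 (\<rho>1 (\<kappa>1 (\<kappa>2 q)))) q" if q: "q \<in> FA n" for q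
  proof -
    have "cga_eq n E2 (\<rho>2 (\<rho>1 (\<kappa>1 (\<kappa>2 q)))) (\<rho>2 (\<kappa>2 q))"
      by (rule alg_hom_cga_eq[OF h(3) i(3)]) (use q h alg_hom_FA c(2) in auto)
    then show ?thesis
      using c(4)[OF q] by (rule cga_eq_trans)
  qed
  moreover have "maps_ideal n E E2 (\<rho>2 \<circ> \<rho>1)" "maps_ideal n E2 E (\<kappa>1 \<circ> \<kappa>2)"
    using i by (auto simp: maps_ideal_def)
  ultimately show ?thesis
    unfolding inverse_homs_def using h by (auto intro: alg_hom_comp)
qed

lemma class_mem: "p \<in> FA n \<Longrightarrow> p \<in> cga_class n E p"
  by (simp add: cga_class_def psub_eq)

lemma class_memD: "a \<in> cga_class n E p \<Longrightarrow> a \<in> FA n \<and> cga_eq n E p a"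
  by (simp add: cga_class_def psub_eq cga_eq_def)

lemma class_eq_iff:
  assumes "p \<in> FA n" "q \<in> FA n"
  shows "cga_class n E p = cga_class n E q \<longleftrightarrow> cga_eq n E p q"
proof
  assume "cga_class n E p = cga_class n E q"
  then show "cga_eq n E p q"
    using class_mem[OF assms(2)] class_memD by blast
next
  assume pq: "cga_eq n E p q"
  have "cga_eq n E p x \<longleftrightarrow> cga_eq n E q x" for x
    using cga_eq_sym cga_eq_trans pq by blast
  then show "cga_class n E p = cga_class n E q"
    unfolding cga_class_def psub_eq cga_eq_def[symmetric] by blast
qed

definition induced_map :: "nat \<Rightarrow> nat set set \<Rightarrow> (ncpoly \<Rightarrow> ncpoly) \<Rightarrow> ncpoly set \<Rightarrow> ncpoly set" where
  "induced_map n E' \<rho> C = cga_class n E' (\<rho> (SOME p. p \<in> C))"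

lemma induced_map_class:
  assumes h: "alg_hom n \<rho>" and i: "maps_ideal n E E' \<rho>" and p: "p \<in> FA n"
  shows "induced_map n E' \<rho> (cga_class n E p) = cga_class n E' (\<rho> p)"
proof -
  let ?x = "SOME x. x \<in> cga_class n E p"
  have "?x \<in> cga_class n E p"
    using class_mem[OF p, of E] by (rule someI[where P = "\<lambda>x. x \<in> cga_class n E p"])
  then have x: "?x \<in> FA n" "cga_eq n E p ?x"
    using class_memD by blast+
  have "cga_eq n E' (\<rho> ?x) (\<rho> p)"
    using alg_hom_cga_eq[OF h i p x(1) x(2)] by (rule cga_eq_sym)
  then show ?thesis
    unfolding induced_map_def using class_eq_iff[of "\<rho> ?x" n "\<rho> p" E'] alg_hom_FA[OF h] x p
    by blast
qed

lemma induced_map_bij: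
  assumes "inverse_homs n E E' \<rho> \<kappa>"
  shows "bij_betw (induced_map n E' \<rho>) (cga_carrier n E) (cga_carrier n E')"
proof -
  from assms have h: "alg_hom n \<rho>" "alg_hom n \<kappa>"
    and i: "maps_ideal n E E' \<rho>" "maps_ideal n E' E \<kappa>"
    and c: "\<And>p. p \<in> FA n \<Longrightarrow> cga_eq n E (\<kappa> (\<rho> p)) p"
      "\<And>q. q \<in> FA n \<Longrightarrow> cga_eq n E' (\<rho> (\<kappa> q)) q"
    unfolding inverse_homs_def by auto
  note \<Phi> = induced_map_class[OF h(1) i(1)]
  have "inj_on (induced_map n E' \<rho>) (cga_carrier n E)"
  proof (rule inj_onI)
    fix C1 C2
    assume "C1 \<in> cga_carrier n E" "C2 \<in> cga_carrier n E"
      and eq: "induced_map n E' \<rho> C1 = induced_map n E' \<rho> C2"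
    then obtain p q where p: "p \<in> FA n" "C1 = cga_class n E p" and q: "q \<in> FA n" "C2 = cga_class n E q"
      unfolding cga_carrier_def by blast
    have "cga_class n E' (\<rho> p) = cga_class n E' (\<rho> q)"
      using eq p q \<Phi> by simp
    then have "cga_eq n E' (\<rho> p) (\<rho> q)"
      using class_eq_iff alg_hom_FA[OF h(1)] p q by blast
    then have "cga_eq n E (\<kappa> (\<rho> p)) (\<kappa> (\<rho> q))"
      by (intro alg_hom_cga_eq[OF h(2) i(2)] alg_hom_FA[OF h(1)] p q)
    then have "cga_eq n E p q"
      using c(1)[OF p(1)] c(1)[OF q(1)] cga_eq_sym cga_eq_trans by blast
    then show "C1 = C2"
      using p q class_eq_iff by blast
  qed
  moreover have "induced_map n E' \<rho> ` cga_carrier n E = cga_carrier n E'"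
  proof (intro set_eqI iffI)
    fix C assume "C \<in> induced_map n E' \<rho> ` cga_carrier n E"
    then show "C \<in> cga_carrier n E'"
      using \<Phi> alg_hom_FA[OF h(1)] unfolding cga_carrier_def by auto
  next
    fix C assume "C \<in> cga_carrier n E'"
    then obtain q where q: "q \<in> FA n" "C = cga_class n E' q"
      unfolding cga_carrier_def by blast
    have "cga_class n E' (\<rho> (\<kappa> q)) = cga_class n E' q"
      using class_eq_iff[of "\<rho> (\<kappa> q)" n q E'] alg_hom_FA[OF h(1) alg_hom_FA[OF h(2) q(1)]] q c(2)
      by blast
    then have "C = cga_class n E' (\<rho> (\<kappa> q))"
      using q by simp
    also have "\<dots> = induced_map n E' \<rho> (cga_class n E (\<kappa> q))"
      using \<Phi> alg_hom_FA[OF h(2) q(1)] by simp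
    finally show "C \<in> induced_map n E' \<rho> ` cga_carrier n E"
      using alg_hom_FA[OF h(2) q(1)] unfolding cga_carrier_def by blast
  qed
  ultimately show ?thesis
    by (simp add: bij_betw_def)
qed

theorem inverse_homs_isomorphic:
  assumes inv: "inverse_homs n E E' \<rho> \<kappa>"
  shows "cga_isomorphic n E E'"
proof -
  from inv have h: "alg_hom n \<rho>"
    and ideal_map: "maps_ideal n E E' \<rho>"
    unfolding inverse_homs_def by auto
  note \<Phi> = induced_map_class[OF h ideal_map]
  have "cga_iso_map n E E' (induced_map n E' \<rho>)"
    unfolding cga_iso_map_def
  proof (intro conjI ballI allI impI)
    show "bij_betw (induced_map n E' \<rho>) (cga_carrier n E) (cga_carrier n E')"
      using induced_map_bij[OF inv] .
    show "induced_map n E' \<rho> (cga_class n E pone) = cga_class n E' pone"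
      using \<Phi>[OF FA_pone] alg_hom_one[OF h] by simp
  next
    fix p q a b
    assume p: "p \<in> FA n" and q: "q \<in> FA n"
      and a: "a \<in> induced_map n E' \<rho> (cga_class n E p)"
      and b: "b \<in> induced_map n E' \<rho> (cga_class n E q)"
    have a': "a \<in> FA n" "cga_eq n E' (\<rho> p) a" and b': "b \<in> FA n" "cga_eq n E' (\<rho> q) b"
      using a b \<Phi> p q class_memD by auto
    have \<rho>pq: "\<rho> p \<in> FA n" "\<rho> q \<in> FA n"
      using alg_hom_FA[OF h] p q by auto
    have "induced_map n E' \<rho> (cga_class n E (padd p q)) = cga_class n E' (\<rho> p + \<rho> q)"
      using \<Phi>[OF FA_add[OF p q]] alg_hom_add[OF h p q] by (simp add: padd_eq)
    also have "\<dots> = cga_class n E' (padd a b)"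
      unfolding padd_eq using class_eq_iff[of "\<rho> p + \<rho> q" n "a + b" E'] FA_add a' b' \<rho>pq cga_eq_add
      by blast
    finally show "induced_map n E' \<rho> (cga_class n E (padd p q)) = cga_class n E' (padd a b)" .
    have "induced_map n E' \<rho> (cga_class n E (pmult p q)) = cga_class n E' (pmult (\<rho> p) (\<rho> q))"
      using \<Phi>[OF FA_mult[OF p q]] alg_hom_mult[OF h p q] by simp
    also have "\<dots> = cga_class n E' (pmult a b)"
      using class_eq_iff[of "pmult (\<rho> p) (\<rho> q)" n "pmult a b" E'] FA_mult a' b' \<rho>pq cga_eq_mult
      by blast
    finally show "induced_map n E' \<rho> (cga_class n E (pmult p q)) = cga_class n E' (pmult a b)" .
  next
    fix p a c
    assume p: "p \<in> FA n" and a: "a \<in> induced_map n E' \<rho> (cga_class n E p)"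
    have a': "a \<in> FA n" "cga_eq n E' (\<rho> p) a"
      using a \<Phi>[OF p] class_memD by auto
    have "induced_map n E' \<rho> (cga_class n E (psmult c p)) = cga_class n E' (psmult c (\<rho> p))"
      using \<Phi>[OF FA_smult[OF p]] alg_hom_smult[OF h p] by simp
    also have "\<dots> = cga_class n E' (psmult c a)"
      using class_eq_iff[of "psmult c (\<rho> p)" n "psmult c a" E'] FA_smult a' alg_hom_FA[OF h p] cga_eq_smult
      by blast
    finally show "induced_map n E' \<rho> (cga_class n E (psmult c p)) = cga_class n E' (psmult c a)" .
  qed
  then show ?thesis
    unfolding cga_isomorphic_def by blast
qed

definition satisfies_relations ::
    "nat \<Rightarrow> nat set set \<Rightarrow> nat set set \<Rightarrow> (nat \<Rightarrow> complex) \<Rightarrow> (nat \<Rightarrow> nat list) \<Rightarrow> bool" where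
  "satisfies_relations n E E' C W \<longleftrightarrow>
     (\<forall>i\<in>{1..n}. cga_eq n E' (mon (C i * C i) (W i @ W i)) (mon (-1) []))
   \<and> (\<forall>i\<in>{1..n}. \<forall>j\<in>{1..n}. i \<noteq> j \<longrightarrow>
        cga_eq n E' (mon (C i * C j) (W i @ W j)) (mon (comm_sign E i j * (C j * C i)) (W j @ W i)))"

lemma word_subst_maps_ideal:
  assumes W: "\<And>i. i \<in> {1..n} \<Longrightarrow> set (W i) \<subseteq> {1..n}"
    and sat: "satisfies_relations n E E' C W"
  shows "maps_ideal n E E' (word_subst C W)"
proof -
  have h: "alg_hom n (word_subst C W)"
    using alg_hom_word_subst W by blast
  have gens: "word_subst C W (pmult (pgen i) (pgen j)) = mon (C i * C j) (W i @ W j)"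
    if "i \<in> {1..n}" "j \<in> {1..n}" for i j
    using alg_hom_mult[OF h FA_pgen[OF that(1)] FA_pgen[OF that(2)]]
    by (simp add: word_subst_pgen pmult_mon)
  have prod_FA: "pmult (pgen i) (pgen j) \<in> FA n" if "i \<in> {1..n}" "j \<in> {1..n}" for i j
    using FA_mult FA_pgen that by blast
  have "word_subst C W r \<in> cga_ideal n E'" if r: "r \<in> relators n E" for r
    using r unfolding relators_def
  proof (elim UnE CollectE exE conjE)
    fix i assume r: "r = padd (pmult (pgen i) (pgen i)) pone" and i: "i \<in> {1..n}"
    have "word_subst C W r = mon (C i * C i) (W i @ W i) - mon (-1) []"
      unfolding r padd_eq
      using alg_hom_add[OF h prod_FA[OF i i] FA_pone] gens[OF i i] alg_hom_one[OF h]
      by (simp add: pone_eq_mon diff_conv_add_uminus mon_neg)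
    then show ?thesis
      using sat i by (simp add: satisfies_relations_def cga_eq_def)
  next
    fix i j assume r: "r = padd (pmult (pgen i) (pgen j)) (pmult (pgen j) (pgen i))"
      and ij: "i \<in> {1..n}" "j \<in> {1..n}" "i \<noteq> j" and edge: "{i, j} \<in> E"
    have "word_subst C W r
            = mon (C i * C j) (W i @ W j) - mon (comm_sign E i j * (C j * C i)) (W j @ W i)"
      unfolding r padd_eq using alg_hom_add[OF h prod_FA prod_FA] gens ij edge
      by (simp add: comm_sign_def diff_conv_add_uminus mon_neg)
    then show ?thesis
      using sat ij by (simp add: satisfies_relations_def cga_eq_def)
  next
    fix i j assume r: "r = psub (pmult (pgen i) (pgen j)) (pmult (pgen j) (pgen i))"
      and ij: "i \<in> {1..n}" "j \<in> {1..n}" "i \<noteq> j" and no_edge: "{i, j} \<notin> E"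
    have "word_subst C W r
            = mon (C i * C j) (W i @ W j) - mon (comm_sign E i j * (C j * C i)) (W j @ W i)"
      unfolding r psub_eq using alg_hom_diff[OF h prod_FA prod_FA] gens ij no_edge
      by (simp add: comm_sign_def)
    then show ?thesis
      using sat ij by (simp add: satisfies_relations_def cga_eq_def)
  qed
  then show ?thesis
    by (rule alg_hom_maps_ideal[OF h])
qed

lemma word_subst_inverse_homs:
  assumes W: "\<And>i. i \<in> {1..n} \<Longrightarrow> set (W i) \<subseteq> {1..n}"
    and W': "\<And>i. i \<in> {1..n} \<Longrightarrow> set (W' i) \<subseteq> {1..n}"
    and sat: "satisfies_relations n E E' C W" and sat': "satisfies_relations n E' E C' W'"
    and round_trip: "\<And>i. i \<in> {1..n} \<Longrightarrow> cga_eq n E (word_subst C' W' (mon (C i) (W i))) (pgen i)"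
    and round_trip': "\<And>i. i \<in> {1..n} \<Longrightarrow> cga_eq n E' (word_subst C W (mon (C' i) (W' i))) (pgen i)"
  shows "inverse_homs n E E' (word_subst C W) (word_subst C' W')"
proof -
  have h: "alg_hom n (word_subst C W)" "alg_hom n (word_subst C' W')"
    using alg_hom_word_subst W W' by blast+
  have "cga_eq n E (word_subst C' W' (word_subst C W p)) p" if "p \<in> FA n" for p
    using alg_hom_fixes_all[OF alg_hom_comp[OF h] _ that] round_trip by (simp add: word_subst_pgen)
  moreover have "cga_eq n E' (word_subst C W (word_subst C' W' p)) p" if "p \<in> FA n" for p
    using alg_hom_fixes_all[OF alg_hom_comp[OF h(2,1)] _ that] round_trip' by (simp add: word_subst_pgen)
  moreover have "maps_ideal n E E' (word_subst C W)"
    by (rule word_subst_maps_ideal[OF W sat])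
  moreover have "maps_ideal n E' E (word_subst C' W')"
    by (rule word_subst_maps_ideal[OF W' sat'])
  ultimately show ?thesis
    unfolding inverse_homs_def using h by blast
qed

text \<open>Computable sufficient conditions for the above: the relations are checked by
  normal forms (squares) and by exchange signs (pairs of distinct generators).\<close>
lemma satisfies_relations_by_signs:
  assumes W: "\<And>i. i \<in> {1..n} \<Longrightarrow> set (W i) \<subseteq> {1..n}"
    and squares: "\<And>i. i \<in> {1..n} \<Longrightarrow>
       snd (nf E' (W i @ W i)) = [] \<and> C i * C i * fst (nf E' (W i @ W i)) = -1"
    and pairs: "\<And>i j. i \<in> {1..n} \<Longrightarrow> j \<in> {1..n} \<Longrightarrow> i \<noteq> j \<Longrightarrow>
       exchange_sign E' (W i) (W j) = comm_sign E i j"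
  shows "satisfies_relations n E E' C W"
  unfolding satisfies_relations_def
proof (intro conjI ballI impI)
  fix i assume i: "i \<in> {1..n}"
  show "cga_eq n E' (mon (C i * C i) (W i @ W i)) (mon (-1) [])"
    by (rule cga_eq_by_nf) (use W[OF i] squares[OF i] in simp_all)
next
  fix i j assume ij: "i \<in> {1..n}" "j \<in> {1..n}" "i \<noteq> j"
  show "cga_eq n E' (mon (C i * C j) (W i @ W j)) (mon (comm_sign E i j * (C j * C i)) (W j @ W i))"
    using swap_words[of "W i" n "W j" "[]" "[]" E' "C i * C j"] W ij pairs[OF ij]
    by (simp add: mult_ac)
qed

lemma round_trip_by_nf:
  assumes "i \<in> {1..n}" "set (word_image W' w) \<subseteq> {1..n}"
    and "snd (nf E (word_image W' w)) = [i]" and "c * word_coeff C' w * fst (nf E (word_image W' w)) = 1"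
  shows "cga_eq n E (word_subst C' W' (mon c w)) (pgen i)"
  unfolding word_subst_mon pgen_eq_mon by (rule cga_eq_by_nf) (use assms in simp_all)

lemma relabel_satisfies_relations:
  assumes range: "\<And>i. i \<in> {1..n} \<Longrightarrow> \<pi> i \<in> {1..n}" and inj: "inj_on \<pi> {1..n}"
    and edges: "\<And>i j. i \<in> {1..n} \<Longrightarrow> j \<in> {1..n} \<Longrightarrow> i \<noteq> j \<Longrightarrow> {\<pi> i, \<pi> j} \<in> E' \<longleftrightarrow> {i, j} \<in> E"
  shows "satisfies_relations n E E' (\<lambda>_. 1) (\<lambda>i. [\<pi> i])"
  unfolding satisfies_relations_def
proof (intro conjI ballI impI)
  fix i assume "i \<in> {1..n}"
  then show "cga_eq n E' (mon (1 * 1) ([\<pi> i] @ [\<pi> i])) (mon (-1) [])"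
    using square_cga_eq[of "\<pi> i" n "[]" "[]" E' 1] range by simp
next
  fix i j assume ij: "i \<in> {1..n}" "j \<in> {1..n}" "i \<noteq> j"
  have "\<pi> i \<noteq> \<pi> j"
    using inj ij by (simp add: inj_on_eq_iff)
  moreover have "comm_sign E' (\<pi> i) (\<pi> j) = comm_sign E i j"
    using edges[OF ij] by (simp add: comm_sign_def)
  ultimately show "cga_eq n E' (mon (1 * 1) ([\<pi> i] @ [\<pi> j])) (mon (comm_sign E i j * (1 * 1)) ([\<pi> j] @ [\<pi> i]))"
    using swap_cga_eq[of "\<pi> i" n "\<pi> j" "[]" "[]" E' 1] range ij by simp
qed

lemma relabel_inverse_homs:
  assumes perm: "\<And>i. i \<in> {1..n} \<Longrightarrow> \<pi> i \<in> {1..n} \<and> \<pi>' i \<in> {1..n} \<and> \<pi>' (\<pi> i) = i \<and> \<pi> (\<pi>' i) = i"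
    and edges: "\<And>i j. i \<in> {1..n} \<Longrightarrow> j \<in> {1..n} \<Longrightarrow> i \<noteq> j \<Longrightarrow> {\<pi> i, \<pi> j} \<in> E' \<longleftrightarrow> {i, j} \<in> E"
  shows "inverse_homs n E E' (word_subst (\<lambda>_. 1) (\<lambda>i. [\<pi> i])) (word_subst (\<lambda>_. 1) (\<lambda>i. [\<pi>' i]))"
proof (rule word_subst_inverse_homs)
  have inj: "inj_on \<pi> {1..n}" "inj_on \<pi>' {1..n}"
    by (intro inj_onI, metis perm)+
  have edges': "{\<pi>' i, \<pi>' j} \<in> E \<longleftrightarrow> {i, j} \<in> E'" if ij: "i \<in> {1..n}" "j \<in> {1..n}" "i \<noteq> j" for i j
  proof -
    have "\<pi>' i \<in> {1..n}" "\<pi>' j \<in> {1..n}" "\<pi>' i \<noteq> \<pi>' j"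
      using perm ij by metis+
    then show ?thesis
      using edges[of "\<pi>' i" "\<pi>' j"] perm ij by simp
  qed
  show "satisfies_relations n E E' (\<lambda>_. 1) (\<lambda>i. [\<pi> i])"
    by (rule relabel_satisfies_relations[OF _ inj(1)]) (use perm edges in blast)+
  show "satisfies_relations n E' E (\<lambda>_. 1) (\<lambda>i. [\<pi>' i])"
    by (rule relabel_satisfies_relations[OF _ inj(2)]) (use perm edges' in blast)+
  show "set [\<pi> i] \<subseteq> {1..n}" "set [\<pi>' i] \<subseteq> {1..n}" if "i \<in> {1..n}" for i
    using perm that by auto
  show "cga_eq n E (word_subst (\<lambda>_. 1) (\<lambda>i. [\<pi>' i]) (mon 1 [\<pi> i])) (pgen i)"
    "cga_eq n E' (word_subst (\<lambda>_. 1) (\<lambda>i. [\<pi> i]) (mon 1 [\<pi>' i])) (pgen i)" if "i \<in> {1..n}" for i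
    using perm that by (simp_all add: word_subst_mon pgen_eq_mon cga_eq_refl)
qed

section \<open>Splitting off the edge 1 -- 2\<close>

text \<open>Let G contain the edge {1, 2} and write alpha_k, beta_k for adjacency of k to 1, 2.
  The new graph keeps the edge {1, 2}, isolates 1 and 2 from the rest, and joins k, l >= 3
  iff [k ~ l] + beta_k alpha_l + alpha_k beta_l is odd.\<close>

definition adj1 :: "nat set set \<Rightarrow> nat \<Rightarrow> bool" where
  "adj1 G k \<longleftrightarrow> {1, k} \<in> G"

definition adj2 :: "nat set set \<Rightarrow> nat \<Rightarrow> bool" where
  "adj2 G k \<longleftrightarrow> {2, k} \<in> G"

definition split_adj :: "nat set set \<Rightarrow> nat \<Rightarrow> nat \<Rightarrow> bool" where
  "split_adj G k l \<longleftrightarrow> (({k, l} \<in> G) \<noteq> ((adj2 G k \<and> adj1 G l) \<noteq> (adj1 G k \<and> adj2 G l)))"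

definition split_graph :: "nat set set \<Rightarrow> nat \<Rightarrow> nat set set" where
  "split_graph G n =
     {{1, 2}} \<union> {{k, l} | k l. k \<in> {3..n} \<and> l \<in> {3..n} \<and> k \<noteq> l \<and> split_adj G k l}"

text \<open>The isomorphism A_G \<rightarrow> A_(split_graph G n) fixes e_1, e_2 and maps, for k >= 3,
  e_k to c_k e_k e_2^alpha_k e_1^beta_k: the extra factors make the image anticommute with
  e_1 and e_2 exactly as e_k does in A_G, and the scalar c_k restores the square -1.
  The inverse maps e_k to c'_k e_k e_1^beta_k e_2^alpha_k.\<close>

definition split_word :: "nat set set \<Rightarrow> nat \<Rightarrow> nat list" where
  "split_word G i = (if i \<le> 2 then [i]
     else i # (if adj1 G i then [2] else []) @ (if adj2 G i then [1] else []))"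

definition split_coeff :: "nat set set \<Rightarrow> nat \<Rightarrow> complex" where
  "split_coeff G i = (if i \<le> 2 then 1 else if adj1 G i \<and> adj2 G i then - \<i>
     else if adj1 G i \<or> adj2 G i then \<i> else 1)"

definition unsplit_word :: "nat set set \<Rightarrow> nat \<Rightarrow> nat list" where
  "unsplit_word G i = (if i \<le> 2 then [i]
     else i # (if adj2 G i then [1] else []) @ (if adj1 G i then [2] else []))"

definition unsplit_coeff :: "nat set set \<Rightarrow> nat \<Rightarrow> complex" where
  "unsplit_coeff G i = (if i \<le> 2 then 1 else if adj1 G i \<or> adj2 G i then \<i> else 1)"

lemma split_adj_commute: "split_adj G l k = split_adj G k l"
  unfolding split_adj_def by (auto simp: insert_commute)

lemma split_graph_edge_iff:
  assumes "x \<noteq> y"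
  shows "{x, y} \<in> split_graph G n \<longleftrightarrow>
           {x, y} = {1, 2} \<or> (2 < x \<and> 2 < y \<and> x \<le> n \<and> y \<le> n \<and> split_adj G x y)"
proof
  assume "{x, y} \<in> split_graph G n"
  then consider "{x, y} = {1, 2}"
    | k l where "{x, y} = {k, l}" "k \<in> {3..n}" "l \<in> {3..n}" "split_adj G k l"
    unfolding split_graph_def by blast
  then show "{x, y} = {1, 2} \<or> (2 < x \<and> 2 < y \<and> x \<le> n \<and> y \<le> n \<and> split_adj G x y)"
  proof cases
    case (2 k l)
    then have "(x = k \<and> y = l) \<or> (x = l \<and> y = k)"
      by (simp add: doubleton_eq_iff)
    then show ?thesis
      using 2 split_adj_commute by auto
  qed simp
next
  assume "{x, y} = {1, 2} \<or> (2 < x \<and> 2 < y \<and> x \<le> n \<and> y \<le> n \<and> split_adj G x y)"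
  then show "{x, y} \<in> split_graph G n"
    unfolding split_graph_def using assms by fastforce
qed

lemma split_graph_shape:
  assumes "2 \<le> n"
  shows "simple_graph n (split_graph G n)" "{1, 2} \<in> split_graph G n"
    "\<forall>e\<in>split_graph G n. e = {1, 2} \<or> e \<subseteq> {3..n}"
  using assms unfolding simple_graph_def split_graph_def by force+

text \<open>Arithmetic facts about a vertex k >= 3, in the forms met by the simplifier in the
  case analyses below.\<close>
lemma large_vertex_facts:
  assumes "2 < i"
  shows "i \<noteq> 1" "i \<noteq> 2" "i \<noteq> 0" "i \<noteq> Suc 0" "\<not> i \<le> 2" "\<not> i < 1" "\<not> i < 2" "\<not> i < Suc 0"
    "1 \<noteq> i" "2 \<noteq> i" "0 \<noteq> i" "Suc 0 \<noteq> i" "1 < i" "Suc 0 < i" "\<not> i \<le> Suc 0" "\<not> i \<le> 1"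
  using assms by auto

lemma comm_sign_adj:
  "comm_sign G i 1 = (if adj1 G i then -1 else 1)" "comm_sign G 1 i = (if adj1 G i then -1 else 1)"
  "comm_sign G i (Suc 0) = (if adj1 G i then -1 else 1)"
  "comm_sign G (Suc 0) i = (if adj1 G i then -1 else 1)"
  "comm_sign G i 2 = (if adj2 G i then -1 else 1)" "comm_sign G 2 i = (if adj2 G i then -1 else 1)"
  by (simp_all add: comm_sign_def adj1_def adj2_def insert_commute)

lemma comm_sign_edge_12:
  assumes "{1, 2} \<in> G"
  shows "comm_sign G 1 2 = -1" "comm_sign G 2 1 = -1"
    "comm_sign G (Suc 0) 2 = -1" "comm_sign G 2 (Suc 0) = -1"
  using assms by (simp_all add: comm_sign_def insert_commute)

lemma comm_sign_split_graph_12: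
  "comm_sign (split_graph G n) 1 2 = -1" "comm_sign (split_graph G n) 2 1 = -1"
  "comm_sign (split_graph G n) (Suc 0) 2 = -1" "comm_sign (split_graph G n) 2 (Suc 0) = -1"
  by (simp_all add: comm_sign_edge_12 split_graph_def)

lemma comm_sign_split_graph_small:
  assumes "2 < i"
  shows "comm_sign (split_graph G n) i 1 = 1" "comm_sign (split_graph G n) 1 i = 1"
    "comm_sign (split_graph G n) i (Suc 0) = 1" "comm_sign (split_graph G n) (Suc 0) i = 1"
    "comm_sign (split_graph G n) i 2 = 1" "comm_sign (split_graph G n) 2 i = 1"
  using assms by (auto simp: comm_sign_def split_graph_edge_iff doubleton_eq_iff)

lemma comm_sign_split_graph_large:
  assumes "2 < i" "2 < j" "i \<le> n" "j \<le> n" "i \<noteq> j"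
  shows "comm_sign (split_graph G n) i j = (if split_adj G i j then -1 else 1)"
  using assms by (simp add: comm_sign_def split_graph_edge_iff doubleton_eq_iff)

lemma vertex_cases:
  assumes "(i::nat) \<in> {1..n}"
  obtains "i = 1" | "i = 2" | "2 < i" "i \<le> n"
  using assms by fastforce

lemma split_word_range: "2 \<le> n \<Longrightarrow> i \<in> {1..n} \<Longrightarrow> set (split_word G i) \<subseteq> {1..n}"
  by (auto simp: split_word_def)

lemma unsplit_word_range: "2 \<le> n \<Longrightarrow> i \<in> {1..n} \<Longrightarrow> set (unsplit_word G i) \<subseteq> {1..n}"
  by (auto simp: unsplit_word_def)

text \<open>The core sign computation: for k, l >= 3 the images of e_k and e_l commute in the split
  graph exactly when e_k and e_l commute in G. This is where the parity rule defining
  split_adj comes from.\<close>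
lemma split_exchange_sign_large:
  assumes i: "2 < i" "i \<le> n" and j: "2 < j" "j \<le> n" and ij: "i \<noteq> j"
  shows "exchange_sign (split_graph G n) (split_word G i) (split_word G j) = comm_sign G i j"
proof -
  have "comm_sign (split_graph G n) i j = (if split_adj G i j then -1 else 1)"
    "comm_sign (split_graph G n) j i = (if split_adj G i j then -1 else 1)"
    using comm_sign_split_graph_large[of i j n G] i j ij comm_sign_commute split_adj_commute by auto
  then show ?thesis
    using large_vertex_facts[OF i(1)] large_vertex_facts[OF j(1)] ij
      comm_sign_split_graph_small[OF i(1)] comm_sign_split_graph_small[OF j(1)] comm_sign_split_graph_12
    by (cases "adj1 G i"; cases "adj2 G i"; cases "adj1 G j"; cases "adj2 G j";
        simp add: split_word_def letter_sign_def split_adj_def comm_sign_def)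
qed

lemma split_exchange_sign_small:
  assumes e: "{1, 2} \<in> G" and i: "2 < i"
  shows "exchange_sign (split_graph G n) (split_word G i) (split_word G 1) = comm_sign G i 1"
    "exchange_sign (split_graph G n) (split_word G 1) (split_word G i) = comm_sign G 1 i"
    "exchange_sign (split_graph G n) (split_word G i) (split_word G 2) = comm_sign G i 2"
    "exchange_sign (split_graph G n) (split_word G 2) (split_word G i) = comm_sign G 2 i"
  using large_vertex_facts[OF i] comm_sign_split_graph_small[OF i] comm_sign_split_graph_12
    comm_sign_adj[of G i] comm_sign_edge_12[OF e]
  by (cases "adj1 G i"; cases "adj2 G i"; simp add: split_word_def letter_sign_def)+

lemma split_exchange_sign_12:
  assumes e: "{1, 2} \<in> G"
  shows "exchange_sign (split_graph G n) (split_word G 1) (split_word G 2) = comm_sign G 1 2"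
    "exchange_sign (split_graph G n) (split_word G 2) (split_word G 1) = comm_sign G 2 1"
  using comm_sign_split_graph_12 comm_sign_edge_12[OF e]
  by (simp_all add: split_word_def letter_sign_def)

lemma split_exchange_sign:
  assumes e: "{1, 2} \<in> G" and i: "i \<in> {1..n}" and j: "j \<in> {1..n}" and ij: "i \<noteq> j"
  shows "exchange_sign (split_graph G n) (split_word G i) (split_word G j) = comm_sign G i j"
  using i j ij split_exchange_sign_large[of i n j G] split_exchange_sign_small[OF e]
    split_exchange_sign_12[OF e]
  by (cases rule: vertex_cases[OF i]; cases rule: vertex_cases[OF j]) auto

lemma unsplit_exchange_sign_large:
  assumes e: "{1, 2} \<in> G" and i: "2 < i" "i \<le> n" and j: "2 < j" "j \<le> n" and ij: "i \<noteq> j"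
  shows "exchange_sign G (unsplit_word G i) (unsplit_word G j) = comm_sign (split_graph G n) i j"
proof -
  have "comm_sign (split_graph G n) i j = (if split_adj G i j then -1 else 1)"
    using comm_sign_split_graph_large[of i j n G] i j ij by auto
  moreover have "comm_sign G i j = (if {i, j} \<in> G then -1 else 1)"
    "comm_sign G j i = (if {i, j} \<in> G then -1 else 1)"
    by (simp_all add: comm_sign_def insert_commute)
  ultimately show ?thesis
    using large_vertex_facts[OF i(1)] large_vertex_facts[OF j(1)] ij
      comm_sign_adj[of G i] comm_sign_adj[of G j] comm_sign_edge_12[OF e]
    by (cases "adj1 G i"; cases "adj2 G i"; cases "adj1 G j"; cases "adj2 G j";
        simp add: unsplit_word_def letter_sign_def split_adj_def)
qed

lemma unsplit_exchange_sign_small: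
  assumes e: "{1, 2} \<in> G" and i: "2 < i"
  shows "exchange_sign G (unsplit_word G i) (unsplit_word G 1) = comm_sign (split_graph G n) i 1"
    "exchange_sign G (unsplit_word G 1) (unsplit_word G i) = comm_sign (split_graph G n) 1 i"
    "exchange_sign G (unsplit_word G i) (unsplit_word G 2) = comm_sign (split_graph G n) i 2"
    "exchange_sign G (unsplit_word G 2) (unsplit_word G i) = comm_sign (split_graph G n) 2 i"
  using large_vertex_facts[OF i] comm_sign_split_graph_small[OF i] comm_sign_split_graph_12
    comm_sign_adj[of G i] comm_sign_edge_12[OF e]
  by (cases "adj1 G i"; cases "adj2 G i"; simp add: unsplit_word_def letter_sign_def)+

lemma unsplit_exchange_sign_12:
  assumes e: "{1, 2} \<in> G"
  shows "exchange_sign G (unsplit_word G 1) (unsplit_word G 2) = comm_sign (split_graph G n) 1 2"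
    "exchange_sign G (unsplit_word G 2) (unsplit_word G 1) = comm_sign (split_graph G n) 2 1"
  using comm_sign_split_graph_12 comm_sign_edge_12[OF e]
  by (simp_all add: unsplit_word_def letter_sign_def)

lemma unsplit_exchange_sign:
  assumes e: "{1, 2} \<in> G" and i: "i \<in> {1..n}" and j: "j \<in> {1..n}" and ij: "i \<noteq> j"
  shows "exchange_sign G (unsplit_word G i) (unsplit_word G j) = comm_sign (split_graph G n) i j"
  using i j ij unsplit_exchange_sign_large[OF e, of i n j] unsplit_exchange_sign_small[OF e]
    unsplit_exchange_sign_12[OF e]
  by (cases rule: vertex_cases[OF i]; cases rule: vertex_cases[OF j]) auto

lemma split_square:
  assumes "i \<in> {1..n}"
  shows "snd (nf (split_graph G n) (split_word G i @ split_word G i)) = []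
       \<and> split_coeff G i * split_coeff G i * fst (nf (split_graph G n) (split_word G i @ split_word G i)) = -1"
proof (cases rule: vertex_cases[OF assms])
  case 3
  then show ?thesis
    using large_vertex_facts[of i] comm_sign_split_graph_small[of i G n] comm_sign_split_graph_12
    by (cases "adj1 G i"; cases "adj2 G i"; simp add: split_word_def split_coeff_def)
qed (simp_all add: split_word_def split_coeff_def)

lemma unsplit_square:
  assumes e: "{1, 2} \<in> G" and "i \<in> {1..n}"
  shows "snd (nf G (unsplit_word G i @ unsplit_word G i)) = []
       \<and> unsplit_coeff G i * unsplit_coeff G i * fst (nf G (unsplit_word G i @ unsplit_word G i)) = -1"
proof (cases rule: vertex_cases[OF assms(2)])
  case 3
  then show ?thesis
    using large_vertex_facts[of i] comm_sign_adj[of G i] comm_sign_edge_12[OF e]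
    by (cases "adj1 G i"; cases "adj2 G i"; simp add: unsplit_word_def unsplit_coeff_def)
qed (simp_all add: unsplit_word_def unsplit_coeff_def)

lemma unsplit_split:
  assumes e: "{1, 2} \<in> G" and "i \<in> {1..n}"
  shows "snd (nf G (word_image (unsplit_word G) (split_word G i))) = [i]
       \<and> split_coeff G i * word_coeff (unsplit_coeff G) (split_word G i)
           * fst (nf G (word_image (unsplit_word G) (split_word G i))) = 1"
proof (cases rule: vertex_cases[OF assms(2)])
  case 3
  then show ?thesis
    using large_vertex_facts[of i] comm_sign_adj[of G i] comm_sign_edge_12[OF e]
    by (cases "adj1 G i"; cases "adj2 G i";
        simp add: unsplit_word_def unsplit_coeff_def split_word_def split_coeff_def)
qed (simp_all add: unsplit_word_def unsplit_coeff_def split_word_def split_coeff_def)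

lemma split_unsplit:
  assumes "i \<in> {1..n}"
  shows "snd (nf (split_graph G n) (word_image (split_word G) (unsplit_word G i))) = [i]
       \<and> unsplit_coeff G i * word_coeff (split_coeff G) (unsplit_word G i)
           * fst (nf (split_graph G n) (word_image (split_word G) (unsplit_word G i))) = 1"
proof (cases rule: vertex_cases[OF assms])
  case 3
  then show ?thesis
    using large_vertex_facts[of i] comm_sign_split_graph_small[of i G n] comm_sign_split_graph_12
    by (cases "adj1 G i"; cases "adj2 G i";
        simp add: unsplit_word_def unsplit_coeff_def split_word_def split_coeff_def)
qed (simp_all add: unsplit_word_def unsplit_coeff_def split_word_def split_coeff_def)

theorem split_inverse_homs:
  assumes e: "{1, 2} \<in> G" and n: "2 \<le> n"
  shows "inverse_homs n G (split_graph G n)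
           (word_subst (split_coeff G) (split_word G)) (word_subst (unsplit_coeff G) (unsplit_word G))"
proof (rule word_subst_inverse_homs)
  show "satisfies_relations n G (split_graph G n) (split_coeff G) (split_word G)"
    by (rule satisfies_relations_by_signs)
      (use split_word_range[OF n] split_square split_exchange_sign[OF e] in auto)
  show "satisfies_relations n (split_graph G n) G (unsplit_coeff G) (unsplit_word G)"
    by (rule satisfies_relations_by_signs)
      (use unsplit_word_range[OF n] unsplit_square[OF e] unsplit_exchange_sign[OF e] in auto)
  fix i assume i: "i \<in> {1..n}"
  have images: "set (word_image (unsplit_word G) (split_word G i)) \<subseteq> {1..n}"
    "set (word_image (split_word G) (unsplit_word G i)) \<subseteq> {1..n}"
    using split_word_range[OF n] unsplit_word_range[OF n] i by (intro word_image_range; blast)+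
  show "cga_eq n G (word_subst (unsplit_coeff G) (unsplit_word G) (mon (split_coeff G i) (split_word G i)))
          (pgen i)"
    by (rule round_trip_by_nf[OF i images(1)]) (use unsplit_split[OF e i] in auto)
  show "cga_eq n (split_graph G n)
          (word_subst (split_coeff G) (split_word G) (mon (unsplit_coeff G i) (unsplit_word G i))) (pgen i)"
    by (rule round_trip_by_nf[OF i images(2)]) (use split_unsplit[OF i] in auto)
  show "set (split_word G i) \<subseteq> {1..n}" "set (unsplit_word G i) \<subseteq> {1..n}"
    using split_word_range[OF n i] unsplit_word_range[OF n i] .
qed

text \<open>Relabel by the permutation (1 a) (2 c), where c is the image of b under (1 a); it maps
  1 to a and 2 to b.\<close>
lemma relabel_edge_to_12:
  assumes ab: "{a, b} \<in> E" "a \<noteq> b" "a \<in> {1..n}" "b \<in> {1..n}"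
  obtains E1 \<rho> \<kappa> where "{1, 2} \<in> E1" "inverse_homs n E E1 \<rho> \<kappa>"
proof -
  have r12: "1 \<in> {1..n}" "2 \<in> {1..n}"
    using ab by auto
  define c where "c = Transposition.transpose 1 a b"
  define \<pi> where "\<pi> = Transposition.transpose 1 a \<circ> Transposition.transpose 2 c"
  define \<pi>' where "\<pi>' = Transposition.transpose 2 c \<circ> Transposition.transpose 1 a"
  have range: "Transposition.transpose x y z \<in> {1..n}"
    if "x \<in> {1..n}" "y \<in> {1..n}" "z \<in> {1..n}" for x y z
    using that by (simp add: transpose_def)
  have c: "c \<in> {1..n}" "c \<noteq> 1"
    using ab r12 range unfolding c_def by (auto simp: transpose_def)
  have perm: "\<pi> i \<in> {1..n} \<and> \<pi>' i \<in> {1..n} \<and> \<pi>' (\<pi> i) = i \<and> \<pi> (\<pi>' i) = i" if "i \<in> {1..n}" for i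
    using that ab(3) c(1) r12 range unfolding \<pi>_def \<pi>'_def by simp
  have \<pi>12: "\<pi> 1 = a" "\<pi> 2 = b"
    using c ab(2) unfolding \<pi>_def c_def by (simp_all add: transpose_def)
  define E1 where "E1 = {{i, j} | i j. i \<in> {1..n} \<and> j \<in> {1..n} \<and> i \<noteq> j \<and> {\<pi> i, \<pi> j} \<in> E}"
  have edges: "{\<pi> i, \<pi> j} \<in> E \<longleftrightarrow> {i, j} \<in> E1" if "i \<in> {1..n}" "j \<in> {1..n}" "i \<noteq> j" for i j
  proof
    assume "{\<pi> i, \<pi> j} \<in> E"
    then show "{i, j} \<in> E1"
      unfolding E1_def using that by blast
  next
    assume "{i, j} \<in> E1"
    then obtain i' j' where "{i, j} = {i', j'}" "{\<pi> i', \<pi> j'} \<in> E"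
      unfolding E1_def by blast
    then show "{\<pi> i, \<pi> j} \<in> E"
      by (auto simp: doubleton_eq_iff insert_commute)
  qed
  have "inverse_homs n E1 E (word_subst (\<lambda>_. 1) (\<lambda>i. [\<pi> i])) (word_subst (\<lambda>_. 1) (\<lambda>i. [\<pi>' i]))"
    by (rule relabel_inverse_homs[OF perm edges])
  moreover have "{1, 2} \<in> E1"
    using edges[OF r12] \<pi>12 ab by simp
  ultimately show ?thesis
    using that inverse_homs_sym by blast
qed

theorem mainTheorem2:
  fixes n :: nat and E :: "nat set set"
  assumes "simple_graph n E" and "E \<noteq> {}"
  shows "\<exists>E'. simple_graph n E'
              \<and> {1, 2} \<in> E'
              \<and> (\<forall>e\<in>E'. e = {1, 2} \<or> e \<subseteq> {3..n})
              \<and> cga_isomorphic n E E'"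
proof -
  obtain e where "e \<in> E"
    using assms(2) by blast
  moreover obtain a b where "e = {a, b}" "a \<noteq> b" "a \<in> {1..n}" "b \<in> {1..n}"
    using assms(1) \<open>e \<in> E\<close> unfolding simple_graph_def by blast
  ultimately have ab: "{a, b} \<in> E" "a \<noteq> b" "a \<in> {1..n}" "b \<in> {1..n}"
    by auto
  then have n: "2 \<le> n"
    by auto
  obtain E1 \<rho> \<kappa> where e12: "{1, 2} \<in> E1" and relabel: "inverse_homs n E E1 \<rho> \<kappa>"
    using relabel_edge_to_12[OF ab] by blast
  have "cga_isomorphic n E (split_graph E1 n)"
    using inverse_homs_trans[OF relabel split_inverse_homs[OF e12 n]] by (rule inverse_homs_isomorphic)
  then show ?thesis
    using split_graph_shape[OF n, of E1] by blast
qed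

end
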